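(* Let $x,y \in \mathcal{G}$. We have that \begin{align*} \eta_x^2 = \eta_x\sigma(x,x^{-1}), & \text{ } n_x^2 = n_x, \\ \eta_x = 0 \iff \sigma(x,x^{-1}) = 0 \iff & \Gamma(x) = 0 \iff n_x = 0, \\ r(x) = r(y) \implies (\eta_x\eta_y = 0 & \iff \eta_y\eta_x = 0 \iff n_xn_y = 0), \\ d(x) = r(y) \implies \Gamma(x)n_y & = n_{xy}\Gamma(x), \\ r(x) = r(y) \implies n_xn_y & = n_yn_x. \end{align*}
   Context: Let $\mathbb{K}$ be a field and $\mathbb{K}^*$ its multiplicative group. Let $\mathcal{G}$ be a groupoid (a set with a partially defined associative product in which each $g$ has domain $d(g)=g^{-1}g$, range $r(g)=gg^{-1}$ and inverse $g^{-1}$; $\exists gh$ iff $d(g)=r(h)$). A $\mathbb{K}$-semigroup is a semigroup $S$ with $0$ together with a map $\mathbb{K}\times S\to S$ such that $\alpha(\beta x)=(\alpha\beta)x$, $1_\mathbb{K}x=x$, $\alpha(xy)=(\alpha x)y=x(\alpha y)$ and $0_\mathbb{K}x = x0_\mathbb{K}=0_S$; it is $\mathbb{K}$-cancellative if moreover $\alpha x=\beta x$ with $0\neq x$ implies $\alpha=\beta$. Let $S$ be a $\mathbb{K}$-cancellative semigroup and $\Gamma:\mathcal{G}\to S$ a partial projective representation of $\mathcal{G}$, i.e. the composition of $\Gamma$ with the projection $S\to S/\lambda$ (where $x\lambda y$ iff $x=\alpha y$ for some $\alpha\in\mathbb{K}^*$) is a partial homomorphism: if $\exists xy$ then $\exists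 \varphi(x)\varphi(y)$ and $\varphi(x^{-1})\varphi(x)\varphi(y)=\varphi(x^{-1})\varphi(xy)$, $\varphi(x)\varphi(y)\varphi(y^{-1})=\varphi(xy)\varphi(y^{-1})$. Let $\sigma:\mathcal{G}\times\mathcal{G}\to\mathbb{K}$ be the factor set associated with $\Gamma$: on $\{(x,y)\in\mathcal{G}^2 : \Gamma(x)\Gamma(y)\neq 0\}$ it is the unique $\mathbb{K}^*$-valued map with $\Gamma(x^{-1})\Gamma(x)\Gamma(y) = \Gamma(x^{-1})\Gamma(xy)\sigma(x,y)$ and $\Gamma(x)\Gamma(y)\Gamma(y^{-1}) = \Gamma(xy)\Gamma(y^{-1})\sigma(x,y)$, and it is set equal to $0$ elsewhere. Assume that $\Gamma(r(x))$ and $\Gamma(d(x))$ are left and right identities to $\Gamma(x)$, respectively, for all $x\in\mathcal{G}$. Then $\sigma(x,x^{-1}) = \sigma(x^{-1},x)$ for all $x$. Write $\eta_x = \Gamma(x)\Gamma(x^{-1})$ and define $n_x = \eta_x\sigma(x^{-1},x)^{-1}$ if $\Gamma(x)\neq 0$, and $n_x=0$ if $\Gamma(x)=0$. *)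

theory Defs
  imports Main
begin

definition gdom :: "('g \<Rightarrow> 'g \<Rightarrow> 'g) \<Rightarrow> ('g \<Rightarrow> 'g) \<Rightarrow> 'g \<Rightarrow> 'g" where
  "gdom m i x = m (i x) x"

definition gran :: "('g \<Rightarrow> 'g \<Rightarrow> 'g) \<Rightarrow> ('g \<Rightarrow> 'g) \<Rightarrow> 'g \<Rightarrow> 'g" where
  "gran m i x = m x (i x)"

text \<open>The product m x y is meaningful exactly when gdom x = gran y.\<close>
definition groupoid :: "('g \<Rightarrow> 'g \<Rightarrow> 'g) \<Rightarrow> ('g \<Rightarrow> 'g) \<Rightarrow> bool" where
  "groupoid m i \<longleftrightarrow>
     (\<forall>x. i (i x) = x) \<and>
     (\<forall>x y. gdom m i x = gran m i y \<longrightarrow>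
         gdom m i (m x y) = gdom m i y \<and> gran m i (m x y) = gran m i x) \<and>
     (\<forall>x y z. gdom m i x = gran m i y \<and> gdom m i y = gran m i z \<longrightarrow>
         m (m x y) z = m x (m y z)) \<and>
     (\<forall>x y. gdom m i x = gran m i y \<longrightarrow>
         m (i x) (m x y) = y \<and> m (m x y) (i y) = x) \<and>
     (\<forall>x. m (gran m i x) x = x \<and> m x (gdom m i x) = x)"

definition K_semigroup :: "('k::field \<Rightarrow> 's::{semigroup_mult,mult_zero} \<Rightarrow> 's) \<Rightarrow> bool" where
  "K_semigroup act \<longleftrightarrow>
     (\<forall>a b x. act a (act b x) = act (a * b) x) \<and>
     (\<forall>x. act 1 x = x) \<and>
     (\<forall>a x y. act a (x * y) = act a x * y \<and> act a (x * y) = x * act a y) \<and>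
     (\<forall>x. act 0 x = 0)"

definition K_cancellative :: "('k::field \<Rightarrow> 's::{semigroup_mult,mult_zero} \<Rightarrow> 's) \<Rightarrow> bool" where
  "K_cancellative act \<longleftrightarrow> K_semigroup act \<and>
     (\<forall>a b x. x \<noteq> 0 \<and> act a x = act b x \<longrightarrow> a = b)"

text \<open>The relation lambda: x lambda y iff x = alpha y for some nonzero alpha;
  equality in S/lambda of the classes of a and b.\<close>
definition lam :: "('k::field \<Rightarrow> 's \<Rightarrow> 's) \<Rightarrow> 's \<Rightarrow> 's \<Rightarrow> bool" where
  "lam act a b \<longleftrightarrow> (\<exists>\<alpha>. \<alpha> \<noteq> 0 \<and> a = act \<alpha> b)"

definition partial_proj_rep ::
  "('g \<Rightarrow> 'g \<Rightarrow> 'g) \<Rightarrow> ('g \<Rightarrow> 'g) \<Rightarrow> ('k::field \<Rightarrow> 's::{semigroup_mult,mult_zero} \<Rightarrow> 's)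
     \<Rightarrow> ('g \<Rightarrow> 's) \<Rightarrow> bool" where
  "partial_proj_rep m i act \<Gamma> \<longleftrightarrow>
     (\<forall>x y. gdom m i x = gran m i y \<longrightarrow>
        lam act (\<Gamma> (i x) * \<Gamma> x * \<Gamma> y) (\<Gamma> (i x) * \<Gamma> (m x y)) \<and>
        lam act (\<Gamma> x * \<Gamma> y * \<Gamma> (i y)) (\<Gamma> (m x y) * \<Gamma> (i y)))"

definition factor_set ::
  "('g \<Rightarrow> 'g \<Rightarrow> 'g) \<Rightarrow> ('g \<Rightarrow> 'g) \<Rightarrow> ('k::field \<Rightarrow> 's::{semigroup_mult,mult_zero} \<Rightarrow> 's)
     \<Rightarrow> ('g \<Rightarrow> 's) \<Rightarrow> ('g \<Rightarrow> 'g \<Rightarrow> 'k) \<Rightarrow> bool" where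
  "factor_set m i act \<Gamma> \<sigma> \<longleftrightarrow>
     (\<forall>x y. (gdom m i x = gran m i y \<and> \<Gamma> x * \<Gamma> y \<noteq> 0 \<longrightarrow>
          \<sigma> x y \<noteq> 0 \<and>
          \<Gamma> (i x) * \<Gamma> x * \<Gamma> y = act (\<sigma> x y) (\<Gamma> (i x) * \<Gamma> (m x y)) \<and>
          \<Gamma> x * \<Gamma> y * \<Gamma> (i y) = act (\<sigma> x y) (\<Gamma> (m x y) * \<Gamma> (i y))) \<and>
        (\<not> (gdom m i x = gran m i y \<and> \<Gamma> x * \<Gamma> y \<noteq> 0) \<longrightarrow> \<sigma> x y = 0))"

definition eta :: "('g \<Rightarrow> 'g) \<Rightarrow> ('g \<Rightarrow> 's::semigroup_mult) \<Rightarrow> 'g \<Rightarrow> 's" where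
  "eta i \<Gamma> x = \<Gamma> x * \<Gamma> (i x)"

definition nn :: "('g \<Rightarrow> 'g) \<Rightarrow> ('k::field \<Rightarrow> 's::{semigroup_mult,mult_zero} \<Rightarrow> 's)
     \<Rightarrow> ('g \<Rightarrow> 's) \<Rightarrow> ('g \<Rightarrow> 'g \<Rightarrow> 'k) \<Rightarrow> 'g \<Rightarrow> 's" where
  "nn i act \<Gamma> \<sigma> x = (if \<Gamma> x \<noteq> 0 then act (inverse (\<sigma> (i x) x)) (eta i \<Gamma> x) else 0)"

end

theory Submission
  imports Defs
begin

text \<open>Every identity is first proved up to a nonzero scalar, i.e.\ in \<open>S/\<lambda>\<close>, by chaining
  the defining relations of the partial projective representation along suitable groupoid
  elements. The scalar is then removed by normalisation: \<open>\<Gamma>(x)\<Gamma>(x\<inverse>)\<Gamma>(x) = \<sigma>(x,x\<inverse>)\<Gamma>(x)\<close>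
  makes \<open>n\<^sub>x\<close> idempotent, and in a K-cancellative semigroup a relation \<open>a e = \<beta> f a\<close>
  between idempotents \<open>e, f\<close> forces \<open>\<beta> = 1\<close> unless both sides vanish.\<close>

locale groupoid_structure =
  fixes m :: "'g \<Rightarrow> 'g \<Rightarrow> 'g" and i :: "'g \<Rightarrow> 'g"
  assumes groupoid: "groupoid m i"
begin

lemma inv_inv [simp]: "i (i x) = x"
  using groupoid unfolding groupoid_def by blast

lemma gdom_inv [simp]: "gdom m i (i x) = gran m i x"
  by (simp add: gdom_def gran_def)

lemma gran_inv [simp]: "gran m i (i x) = gdom m i x"
  by (simp add: gdom_def gran_def)

lemma mult_inv_right: "m x (i x) = gran m i x"
  by (simp add: gran_def)

lemma inv_mult_left: "m (i x) x = gdom m i x"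
  by (simp add: gdom_def)

lemma gdom_gran_mult:
  "gdom m i x = gran m i y \<Longrightarrow> gdom m i (m x y) = gdom m i y \<and> gran m i (m x y) = gran m i x"
  using groupoid unfolding groupoid_def by blast

lemma assoc:
  "gdom m i x = gran m i y \<Longrightarrow> gdom m i y = gran m i z \<Longrightarrow> m (m x y) z = m x (m y z)"
  using groupoid unfolding groupoid_def by blast

lemma inv_mult_cancel_left: "gdom m i x = gran m i y \<Longrightarrow> m (i x) (m x y) = y"
  using groupoid unfolding groupoid_def by blast

lemma mult_inv_cancel_right: "gdom m i x = gran m i y \<Longrightarrow> m (m x y) (i y) = x"
  using groupoid unfolding groupoid_def by blast

lemma gran_mult_id: "m (gran m i x) x = x"
  and mult_gdom_id: "m x (gdom m i x) = x"
  using groupoid unfolding groupoid_def by blast+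

lemma inv_mult:
  assumes c: "gdom m i x = gran m i y"
  shows "i (m x y) = m (i y) (i x)"
proof -
  define p where "p = m x y"
  define q where "q = m (i y) (i x)"
  have p: "gdom m i p = gdom m i y" "gran m i p = gran m i x"
    using gdom_gran_mult[OF c] unfolding p_def by auto
  have q: "gran m i q = gdom m i y"
    using gdom_gran_mult[of "i y" "i x"] c unfolding q_def by simp
  have "m y q = m (m y (i y)) (i x)"
    unfolding q_def using c by (simp add: assoc)
  also have "\<dots> = i x"
    using c gran_mult_id[of "i x"] by (simp add: mult_inv_right)
  finally have "m p q = m x (i x)"
    unfolding p_def using c q by (simp add: assoc)
  then have "q = m (i p) (m x (i x))"
    using inv_mult_cancel_left[of p q] p q by simp
  also have "\<dots> = i p"
    using mult_gdom_id[of "i p"] p by (simp add: mult_inv_right)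
  finally show ?thesis
    unfolding p_def q_def by simp
qed

end

locale K_semigroup_structure =
  fixes act :: "'k::field \<Rightarrow> 's::{semigroup_mult,mult_zero} \<Rightarrow> 's"
  assumes K_semigroup: "K_semigroup act"
begin

lemma act_act: "act a (act b x) = act (a * b) x"
  and act_one [simp]: "act 1 x = x"
  and act_mult_left: "act a (x * y) = act a x * y"
  and act_mult_right: "act a (x * y) = x * act a y"
  and act_zero_scalar [simp]: "act 0 x = 0"
  using K_semigroup unfolding K_semigroup_def by blast+

lemma act_zero [simp]: "act a 0 = 0"
  using act_mult_left[of a 0 0] by simp

lemma act_mult_act: "act a x * act b y = act (a * b) (x * y)"
  by (metis act_act act_mult_left act_mult_right mult.commute)

lemma act_eq_0_iff: "a \<noteq> 0 \<Longrightarrow> act a x = 0 \<longleftrightarrow> x = 0"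
  by (metis act_act act_one act_zero field_class.field_inverse)

lemma lam_refl: "lam act u u"
  unfolding lam_def by (metis act_one one_neq_zero)

lemma lam_act: "c \<noteq> 0 \<Longrightarrow> lam act (act c u) u"
  unfolding lam_def by blast

lemma lam_sym: "lam act u v \<Longrightarrow> lam act v u"
  unfolding lam_def by (metis act_act act_one field_class.field_inverse inverse_nonzero_iff_nonzero)

lemma lam_trans [trans]: "lam act u v \<Longrightarrow> lam act v w \<Longrightarrow> lam act u w"
  unfolding lam_def by (metis act_act mult_eq_0_iff)

lemma lam_eq_0_iff: "lam act u v \<Longrightarrow> u = 0 \<longleftrightarrow> v = 0"
  unfolding lam_def using act_eq_0_iff by auto

lemma lam_mult: "lam act u u' \<Longrightarrow> lam act v v' \<Longrightarrow> lam act (u * v) (u' * v')"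
  unfolding lam_def by (metis act_mult_act no_zero_divisors)

end

locale K_cancellative_structure =
  fixes act :: "'k::field \<Rightarrow> 's::{semigroup_mult,mult_zero} \<Rightarrow> 's"
  assumes K_cancellative: "K_cancellative act"

sublocale K_cancellative_structure \<subseteq> K_semigroup_structure
  using K_cancellative unfolding K_cancellative_def by unfold_locales blast

context K_cancellative_structure
begin

lemma act_cancel: "x \<noteq> 0 \<Longrightarrow> act a x = act b x \<Longrightarrow> a = b"
  using K_cancellative unfolding K_cancellative_def by blast

lemma lam_intertwining_idempotents_eq:
  assumes e: "e * e = e" and f: "f * f = f" and "lam act (a * e) (f * a)"
  shows "a * e = f * a"
proof -
  obtain \<beta> where \<beta>: "\<beta> \<noteq> 0" "a * e = act \<beta> (f * a)"
    using \<open>lam act (a * e) (f * a)\<close> unfolding lam_def by blast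
  have "act \<beta> (f * a) = a * e * e"
    using e \<beta>(2) by (metis mult.assoc)
  also have "\<dots> = act \<beta> (f * act \<beta> (f * a))"
    using \<beta>(2) by (simp add: act_mult_left act_mult_right mult.assoc)
  also have "\<dots> = act (\<beta> * \<beta>) (f * a)"
    using f by (simp add: act_mult_right act_act mult.assoc[symmetric])
  finally have \<beta>\<beta>: "act \<beta> (f * a) = act (\<beta> * \<beta>) (f * a)" .
  show ?thesis
  proof (cases "f * a = 0")
    case False
    then have "\<beta> * 1 = \<beta> * \<beta>"
      using act_cancel[OF False \<beta>\<beta>] by simp
    then have "\<beta> = 1"
      using \<beta>(1) by (simp only: mult_cancel_left) simp
    then show ?thesis
      using \<beta>(2) by simp
  qed (simp add: \<beta>(2))
qed

end

locale partial_projective_rep =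
  groupoid_structure m i + K_cancellative_structure act
  for m :: "'g \<Rightarrow> 'g \<Rightarrow> 'g" and i :: "'g \<Rightarrow> 'g"
    and act :: "'k::field \<Rightarrow> 's::{semigroup_mult,mult_zero} \<Rightarrow> 's" +
  fixes \<Gamma> :: "'g \<Rightarrow> 's" and \<sigma> :: "'g \<Rightarrow> 'g \<Rightarrow> 'k"
  assumes proj_rep: "partial_proj_rep m i act \<Gamma>"
    and factor_set: "factor_set m i act \<Gamma> \<sigma>"
    and Gamma_gran_mult: "\<And>z. \<Gamma> (gran m i z) * \<Gamma> z = \<Gamma> z"
    and Gamma_mult_gdom: "\<And>z. \<Gamma> z * \<Gamma> (gdom m i z) = \<Gamma> z"
begin

abbreviation \<eta> where "\<eta> \<equiv> eta i \<Gamma>"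
abbreviation \<nu> where "\<nu> \<equiv> nn i act \<Gamma> \<sigma>"

lemma proj_rep_left:
  "gdom m i x = gran m i y \<Longrightarrow> lam act (\<Gamma> (i x) * \<Gamma> x * \<Gamma> y) (\<Gamma> (i x) * \<Gamma> (m x y))"
  and proj_rep_right:
  "gdom m i x = gran m i y \<Longrightarrow> lam act (\<Gamma> x * \<Gamma> y * \<Gamma> (i y)) (\<Gamma> (m x y) * \<Gamma> (i y))"
  using proj_rep unfolding partial_proj_rep_def by blast+

lemma factor_set_nonzero:
  assumes "gdom m i x = gran m i y" "\<Gamma> x * \<Gamma> y \<noteq> 0"
  shows "\<sigma> x y \<noteq> 0"
    and "\<Gamma> (i x) * \<Gamma> x * \<Gamma> y = act (\<sigma> x y) (\<Gamma> (i x) * \<Gamma> (m x y))"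
    and "\<Gamma> x * \<Gamma> y * \<Gamma> (i y) = act (\<sigma> x y) (\<Gamma> (m x y) * \<Gamma> (i y))"
  using factor_set assms unfolding factor_set_def by blast+

lemma factor_set_zero: "\<Gamma> x * \<Gamma> y = 0 \<Longrightarrow> \<sigma> x y = 0"
  using factor_set unfolding factor_set_def by blast

lemma Gamma_regular_lam: "lam act (\<Gamma> x * \<Gamma> (i x) * \<Gamma> x) (\<Gamma> x)"
  using proj_rep_right[of x "i x"] by (simp add: mult_inv_right Gamma_gran_mult)

lemma Gamma_mult_inv_eq_0_iff: "\<Gamma> x * \<Gamma> (i x) = 0 \<longleftrightarrow> \<Gamma> x = 0"
  using lam_eq_0_iff[OF Gamma_regular_lam[of x]] by auto

lemma Gamma_inv_eq_0_iff: "\<Gamma> (i x) = 0 \<longleftrightarrow> \<Gamma> x = 0"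
  by (metis Gamma_mult_inv_eq_0_iff inv_inv mult_zero_left mult_zero_right)

lemma eta_eq_0_iff: "\<eta> x = 0 \<longleftrightarrow> \<Gamma> x = 0"
  unfolding eta_def by (rule Gamma_mult_inv_eq_0_iff)

lemma sigma_inv_eq_0_iff: "\<sigma> x (i x) = 0 \<longleftrightarrow> \<Gamma> x = 0"
  using factor_set_nonzero(1)[of x "i x"] factor_set_zero[of x "i x"]
  by (auto simp: Gamma_mult_inv_eq_0_iff)

lemma Gamma_regular_right: "\<Gamma> x * \<Gamma> (i x) * \<Gamma> x = act (\<sigma> x (i x)) (\<Gamma> x)"
proof (cases "\<Gamma> x = 0")
  case False
  then show ?thesis
    using factor_set_nonzero(3)[of x "i x"]
    by (simp add: Gamma_mult_inv_eq_0_iff mult_inv_right Gamma_gran_mult)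
qed simp

lemma Gamma_regular_left: "\<Gamma> x * \<Gamma> (i x) * \<Gamma> x = act (\<sigma> (i x) x) (\<Gamma> x)"
proof (cases "\<Gamma> x = 0")
  case False
  then have "\<Gamma> (i x) * \<Gamma> x \<noteq> 0"
    using Gamma_mult_inv_eq_0_iff[of "i x"] Gamma_inv_eq_0_iff by simp
  then show ?thesis
    using factor_set_nonzero(2)[of "i x" x] by (simp add: inv_mult_left Gamma_mult_gdom)
qed simp

lemma sigma_inv_sym: "\<sigma> x (i x) = \<sigma> (i x) x"
proof (cases "\<Gamma> x = 0")
  case True
  then show ?thesis
    using sigma_inv_eq_0_iff[of x] sigma_inv_eq_0_iff[of "i x"] Gamma_inv_eq_0_iff by simp
next
  case False
  then show ?thesis
    using act_cancel Gamma_regular_left[of x] Gamma_regular_right[of x] by metis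
qed

lemma eta_square: "\<eta> x * \<eta> x = act (\<sigma> x (i x)) (\<eta> x)"
  using arg_cong[OF Gamma_regular_right[of x], of "\<lambda>u. u * \<Gamma> (i x)"]
  by (simp add: eta_def act_mult_left mult.assoc)

lemma nn_eq_act_eta: "\<nu> x = act (inverse (\<sigma> (i x) x)) (\<eta> x)"
  unfolding nn_def using eta_eq_0_iff[of x] by auto

lemma nn_idem: "\<nu> x * \<nu> x = \<nu> x"
proof -
  let ?s = "\<sigma> (i x) x"
  have "\<nu> x * \<nu> x = act (inverse ?s * inverse ?s * ?s) (\<eta> x)"
    by (simp add: nn_eq_act_eta act_mult_act eta_square sigma_inv_sym act_act)
  also have "inverse ?s * inverse ?s * ?s = inverse ?s"
    by (cases "?s = 0") (auto simp: field_simps)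
  finally show ?thesis
    by (simp add: nn_eq_act_eta)
qed

lemma nn_eq_0_iff: "\<nu> x = 0 \<longleftrightarrow> \<Gamma> x = 0"
proof (cases "\<Gamma> x = 0")
  case False
  then have "inverse (\<sigma> (i x) x) \<noteq> 0"
    using sigma_inv_eq_0_iff sigma_inv_sym by simp
  then show ?thesis
    using nn_eq_act_eta[of x] act_eq_0_iff eta_eq_0_iff by simp
qed (simp add: nn_def)

lemma nn_lam_eta: "lam act (\<nu> x) (\<eta> x)"
proof (cases "\<Gamma> x = 0")
  case True
  then show ?thesis
    using lam_refl eta_eq_0_iff nn_eq_0_iff by metis
next
  case False
  then have "inverse (\<sigma> (i x) x) \<noteq> 0"
    using sigma_inv_eq_0_iff sigma_inv_sym by simp
  then show ?thesis
    unfolding nn_eq_act_eta by (rule lam_act)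
qed

text \<open>Both sides are \<open>\<lambda>\<close>-equivalent to \<open>\<Gamma>(xy)\<Gamma>(y\<inverse>)\<close>.\<close>

lemma Gamma_eta_conj_lam:
  assumes c: "gdom m i x = gran m i y"
  shows "lam act (\<Gamma> x * \<eta> y) (\<eta> (m x y) * \<Gamma> x)"
proof -
  define p where "p = m x y"
  have p: "gdom m i p = gdom m i y" "gran m i p = gran m i x"
    using gdom_gran_mult[OF c] unfolding p_def by auto
  have ipx: "m (i p) x = i y"
    using inv_mult_cancel_left[of p "i y"] mult_inv_cancel_right[OF c] p unfolding p_def by simp
  have "lam act (\<Gamma> x * \<eta> y) (\<Gamma> p * \<Gamma> (i y))"
    using proj_rep_right[OF c] unfolding p_def eta_def by (simp add: mult.assoc)
  moreover have "lam act (\<eta> p * \<Gamma> x) (\<Gamma> p * \<Gamma> (i y))"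
    using proj_rep_left[of "i p" x] p ipx by (simp add: eta_def)
  ultimately show ?thesis
    unfolding p_def by (meson lam_trans lam_sym)
qed

text \<open>With \<open>z = x\<inverse>y\<close>, inserting \<open>\<Gamma>(z) \<lambda> \<Gamma>(z)\<Gamma>(z\<inverse>)\<Gamma>(z)\<close> in
  \<open>\<eta>\<^sub>x\<eta>\<^sub>y \<lambda> \<Gamma>(x)\<Gamma>(z)\<Gamma>(y\<inverse>)\<close> and regrouping leads to \<open>\<Gamma>(y)\<Gamma>(z\<inverse>)\<Gamma>(x\<inverse>) \<lambda> \<eta>\<^sub>y\<eta>\<^sub>x\<close>.\<close>

lemma eta_commute_lam:
  assumes r: "gran m i x = gran m i y"
  shows "lam act (\<eta> x * \<eta> y) (\<eta> y * \<eta> x)"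
proof -
  define z where "z = m (i x) y"
  have c: "gdom m i (i x) = gran m i y"
    using r by simp
  have z: "gdom m i z = gdom m i y" "gran m i z = gdom m i x"
    using gdom_gran_mult[OF c] unfolding z_def by auto
  have iz: "i z = m (i y) x"
    unfolding z_def using inv_mult[OF c] by simp
  have xz: "m x z = y"
    unfolding z_def using inv_mult_cancel_left[OF c] by simp
  have zy: "m z (i y) = i x"
    unfolding z_def using mult_inv_cancel_right[OF c] by simp
  have "lam act (\<eta> x * \<eta> y) (\<Gamma> x * \<Gamma> z * \<Gamma> (i y))"
    using lam_mult[OF lam_refl[of "\<Gamma> x"] proj_rep_right[OF c]]
    unfolding z_def eta_def by (simp add: mult.assoc)
  also have "lam act \<dots> ((\<Gamma> x * \<Gamma> z * \<Gamma> (i z)) * (\<Gamma> z * \<Gamma> (i y)))"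
    using lam_mult[OF lam_mult[OF lam_refl lam_sym[OF Gamma_regular_lam[of z]]] lam_refl]
    by (simp add: mult.assoc)
  also have "lam act \<dots> (\<Gamma> y * (\<Gamma> (i z) * \<Gamma> z * \<Gamma> (i y)))"
    using lam_mult[OF proj_rep_right[of x z] lam_refl] z xz by (simp add: mult.assoc)
  also have "lam act \<dots> (\<Gamma> y * (\<Gamma> (i z) * \<Gamma> (i x)))"
    using lam_mult[OF lam_refl proj_rep_left[of z "i y"]] z zy by simp
  also have "lam act \<dots> (\<Gamma> y * (\<Gamma> (i y) * \<Gamma> x * \<Gamma> (i x)))"
    using lam_mult[OF lam_refl lam_sym[OF proj_rep_right[of "i y" x]]] r iz by simp
  also have "\<Gamma> y * (\<Gamma> (i y) * \<Gamma> x * \<Gamma> (i x)) = \<eta> y * \<eta> x"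
    by (simp add: eta_def mult.assoc)
  finally show ?thesis .
qed

lemma nn_conj:
  assumes "gdom m i x = gran m i y"
  shows "\<Gamma> x * \<nu> y = \<nu> (m x y) * \<Gamma> x"
proof (rule lam_intertwining_idempotents_eq[OF nn_idem nn_idem])
  have "lam act (\<Gamma> x * \<nu> y) (\<Gamma> x * \<eta> y)"
    using lam_mult[OF lam_refl nn_lam_eta] .
  also have "lam act \<dots> (\<eta> (m x y) * \<Gamma> x)"
    using Gamma_eta_conj_lam[OF assms] .
  also have "lam act \<dots> (\<nu> (m x y) * \<Gamma> x)"
    using lam_mult[OF lam_sym[OF nn_lam_eta] lam_refl] .
  finally show "lam act (\<Gamma> x * \<nu> y) (\<nu> (m x y) * \<Gamma> x)" .
qed

lemma nn_mult_lam_eta_mult: "lam act (\<nu> x * \<nu> y) (\<eta> x * \<eta> y)"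
  using lam_mult[OF nn_lam_eta nn_lam_eta] .

lemma nn_commute:
  assumes "gran m i x = gran m i y"
  shows "\<nu> x * \<nu> y = \<nu> y * \<nu> x"
proof (rule lam_intertwining_idempotents_eq[OF nn_idem nn_idem])
  show "lam act (\<nu> x * \<nu> y) (\<nu> y * \<nu> x)"
    using nn_mult_lam_eta_mult eta_commute_lam[OF assms] lam_sym lam_trans by meson
qed

end

theorem mainTheorem17:
  fixes m :: "'g \<Rightarrow> 'g \<Rightarrow> 'g" and i :: "'g \<Rightarrow> 'g"
    and act :: "'k::field \<Rightarrow> 's::{semigroup_mult,mult_zero} \<Rightarrow> 's"
    and \<Gamma> :: "'g \<Rightarrow> 's" and \<sigma> :: "'g \<Rightarrow> 'g \<Rightarrow> 'k" and x y :: 'g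
  assumes "groupoid m i"
    and "K_cancellative act"
    and "partial_proj_rep m i act \<Gamma>"
    and "factor_set m i act \<Gamma> \<sigma>"
    and "\<And>z. \<Gamma> (gran m i z) * \<Gamma> z = \<Gamma> z"
    and "\<And>z. \<Gamma> z * \<Gamma> (gdom m i z) = \<Gamma> z"
  shows "eta i \<Gamma> x * eta i \<Gamma> x = act (\<sigma> x (i x)) (eta i \<Gamma> x)
    \<and> nn i act \<Gamma> \<sigma> x * nn i act \<Gamma> \<sigma> x = nn i act \<Gamma> \<sigma> x
    \<and> (eta i \<Gamma> x = 0 \<longleftrightarrow> \<sigma> x (i x) = 0)
    \<and> (\<sigma> x (i x) = 0 \<longleftrightarrow> \<Gamma> x = 0)
    \<and> (\<Gamma> x = 0 \<longleftrightarrow> nn i act \<Gamma> \<sigma> x = 0)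
    \<and> (gran m i x = gran m i y \<longrightarrow>
         (eta i \<Gamma> x * eta i \<Gamma> y = 0 \<longleftrightarrow> eta i \<Gamma> y * eta i \<Gamma> x = 0)
       \<and> (eta i \<Gamma> y * eta i \<Gamma> x = 0 \<longleftrightarrow> nn i act \<Gamma> \<sigma> x * nn i act \<Gamma> \<sigma> y = 0))
    \<and> (gdom m i x = gran m i y \<longrightarrow>
         \<Gamma> x * nn i act \<Gamma> \<sigma> y = nn i act \<Gamma> \<sigma> (m x y) * \<Gamma> x)
    \<and> (gran m i x = gran m i y \<longrightarrow>
         nn i act \<Gamma> \<sigma> x * nn i act \<Gamma> \<sigma> y = nn i act \<Gamma> \<sigma> y * nn i act \<Gamma> \<sigma> x)"
proof -
  interpret partial_projective_rep m i act \<Gamma> \<sigma>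
    using assms by unfold_locales
  have "gran m i x = gran m i y \<Longrightarrow>
      (eta i \<Gamma> x * eta i \<Gamma> y = 0 \<longleftrightarrow> eta i \<Gamma> y * eta i \<Gamma> x = 0)
    \<and> (eta i \<Gamma> y * eta i \<Gamma> x = 0 \<longleftrightarrow> nn i act \<Gamma> \<sigma> x * nn i act \<Gamma> \<sigma> y = 0)"
    using lam_eq_0_iff[OF eta_commute_lam] lam_eq_0_iff[OF nn_mult_lam_eta_mult] by metis
  then show ?thesis
    using eta_square[of x] nn_idem[of x] eta_eq_0_iff[of x] sigma_inv_eq_0_iff[of x]
      nn_eq_0_iff[of x] nn_conj[of x y] nn_commute[of x y]
    by auto
qed

end
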